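(* In the setting of the context, for $1\le i\le 2n$ let $A_1(i,c)$ be the area of the polygon with vertices $P_i,P_{i+1},\dots,P_{i+n}$ and let $L_V(i,c)=\sum_{j=i}^{i+n-1}\lambda_{j+\frac12}$ be the $V$-length of the polygonal arc $P_i,P_{i+1},\dots,P_{i+n}$. Then $A_1(i,c)-c\,L_V(i,c)$ is independent of $i$.
   Context: $[x,y]$ denotes the determinant of the matrix with columns $x,y\in\mathbb{R}^2$. Fix $n\ge2$; indices (integer and half-integer) are read modulo $2n$. $U$ is a convex $2n$-gon with distinct vertices $U_1,\dots,U_{2n}$ in counterclockwise order with $U_{i+n}=-U_i$, and $V_{i+\frac12}=(U_{i+1}-U_i)/[U_i,U_{i+1}]$. Let $c>0$ and let $P$ be a convex polygon with nonempty interior and vertex list $P_1,\dots,P_{2n}$ (listed counterclockwise, consecutive entries may coincide) with $P_{i+1}-P_i=\lambda_{i+\frac12}V_{i+\frac12}$, $\lambda_{i+\frac12}\ge0$, and $P_i-P_{i+n}=2cU_i$ for all $i$. *)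

theory Defs
  imports "HOL-Analysis.Analysis"
begin

definition det2 :: "real \<times> real \<Rightarrow> real \<times> real \<Rightarrow> real" where
  "det2 x y = fst x * snd y - snd x * fst y"

text \<open>Vertices indexed by nat, read modulo 2n via periodicity.
  Vhalf U i stands for V_{i+1/2}.\<close>
definition Vhalf :: "(nat \<Rightarrow> real \<times> real) \<Rightarrow> nat \<Rightarrow> real \<times> real" where
  "Vhalf U i = (1 / det2 (U i) (U (Suc i))) *\<^sub>R (U (Suc i) - U i)"

definition strictly_convex_ccw :: "nat \<Rightarrow> (nat \<Rightarrow> real \<times> real) \<Rightarrow> bool" where
  "strictly_convex_ccw m U \<longleftrightarrow> inj_on U {1..m} \<and>
     (\<forall>i\<in>{1..m}. \<forall>j\<in>{1..m}. j \<noteq> i \<and> j \<noteq> (i mod m) + 1 \<longrightarrow>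
        det2 (U (Suc i) - U i) (U j - U i) > 0)"

text \<open>Weakly convex, counterclockwise vertex list (consecutive entries may coincide).\<close>
definition convex_ccw :: "nat \<Rightarrow> (nat \<Rightarrow> real \<times> real) \<Rightarrow> bool" where
  "convex_ccw m P \<longleftrightarrow>
     (\<forall>i\<in>{1..m}. \<forall>j\<in>{1..m}. det2 (P (Suc i) - P i) (P j - P i) \<ge> 0)"

text \<open>A_1(i,c): area of the polygon with vertices P_i,...,P_{i+n} (a convex polygon,
  hence equal to the convex hull of these points).\<close>
definition arc_area :: "nat \<Rightarrow> (nat \<Rightarrow> real \<times> real) \<Rightarrow> nat \<Rightarrow> real" where
  "arc_area n P i = measure lebesgue (convex hull (P ` {i..i+n}))"

definition V_length :: "nat \<Rightarrow> (nat \<Rightarrow> real) \<Rightarrow> nat \<Rightarrow> real" where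
  "V_length n lam i = (\<Sum>j=i..i+n-1. lam j)"

end

theory Submission
  imports Defs
begin

text \<open>Passing from the arc P i, ..., P (i + n) to the arc P (i + 1), ..., P (i + n + 1), both arcs
  are obtained from the convex hull of P i, ..., P (i + n + 1) by cutting off a triangle along
  a chord: the chord from P i to P (i + n), parallel to U i, cuts off the triangle
  P (i + n + 1), P i, P (i + n); the chord from P (i + 1) to P (i + n + 1), parallel to U (i + 1),
  cuts off P i, P (i + 1), P (i + n + 1). Since P i - P (i + n) = 2 c U i and
  [U i, V (i + 1/2)] = [U (i + 1), V (i + 1/2)] = 1, these triangles have areas
  c \<lambda> (i + n + 1/2) and c \<lambda> (i + 1/2), which is exactly the change of c L_V.
  That the arcs lie on one side of their chords and that the supporting lines of P have
  directions V follows from the strict convexity and central symmetry of U, which make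
  the edge directions V turn strictly left for fewer than n steps.\<close>

section \<open>Determinants of plane vectors\<close>

lemma det2_add_left [simp]: "det2 (a + b) c = det2 a c + det2 b c"
  and det2_add_right [simp]: "det2 c (a + b) = det2 c a + det2 c b"
  and det2_diff_left: "det2 (a - b) c = det2 a c - det2 b c"
  and det2_diff_right: "det2 c (a - b) = det2 c a - det2 c b"
  and det2_scaleR_left [simp]: "det2 (r *\<^sub>R a) c = r * det2 a c"
  and det2_scaleR_right [simp]: "det2 c (r *\<^sub>R a) = r * det2 c a"
  and det2_minus_left [simp]: "det2 (- a) c = - det2 a c"
  and det2_minus_right [simp]: "det2 c (- a) = - det2 c a"
  and det2_self [simp]: "det2 a a = 0"
  and det2_zero_left [simp]: "det2 0 a = 0"
  and det2_zero_right [simp]: "det2 a 0 = 0"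
  and det2_commute: "det2 a b = - det2 b a"
  by (simp_all add: det2_def algebra_simps)

lemma det2_sum_right: "det2 v (sum f S) = (\<Sum>x\<in>S. det2 v (f x))"
  by (induction S rule: infinite_finite_induct) auto

lemma det2_affine_comb:
  "\<alpha> + \<beta> = 1 \<Longrightarrow> det2 v (\<alpha> *\<^sub>R x + \<beta> *\<^sub>R y - p) = \<alpha> * det2 v (x - p) + \<beta> * det2 v (y - p)"
proof -
  assume "\<alpha> + \<beta> = 1"
  then have \<beta>: "\<beta> = 1 - \<alpha>" by simp
  show ?thesis unfolding det2_def \<beta> by (simp add: algebra_simps)
qed

lemma det2_grassmann_pluecker: "det2 w y * det2 a b = det2 w b * det2 a y - det2 w a * det2 b y"
  by (simp add: det2_def algebra_simps)

lemma det2_nonpos_in_cone: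
  assumes "det2 a b > 0" "det2 a y \<ge> 0" "det2 b y \<ge> 0" "det2 w a > 0" "det2 w b \<le> 0"
  shows "det2 w y \<le> 0"
proof -
  have "det2 w b * det2 a y \<le> 0" "det2 w a * det2 b y \<ge> 0"
    using assms by (simp_all add: mult_nonpos_nonneg)
  then have "det2 w y * det2 a b \<le> 0"
    using det2_grassmann_pluecker[of w y a b] by linarith
  then show ?thesis using assms(1) by (simp add: mult_le_0_iff)
qed

lemma det2_eq_0_imp_parallel:
  assumes "det2 d w = 0" "d \<noteq> 0"
  obtains r where "w = r *\<^sub>R d"
proof
  obtain d1 d2 where d: "d = (d1, d2)" by (cases d)
  obtain w1 w2 where w: "w = (w1, w2)" by (cases w)
  have rel: "d1 * w2 = d2 * w1" using assms(1) by (simp add: det2_def d w)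
  have nz: "d1 * d1 + d2 * d2 \<noteq> 0" using assms(2) d
    by (metis add_nonneg_eq_0_iff mult_eq_0_iff zero_le_square zero_prod_def)
  have "w1 = (d1 * w1 + d2 * w2) / (d1 * d1 + d2 * d2) * d1"
    and "w2 = (d1 * w1 + d2 * w2) / (d1 * d1 + d2 * d2) * d2"
    using nz rel by (simp_all add: field_simps)
  then show "w = ((d \<bullet> w) / (d \<bullet> d)) *\<^sub>R d"
    by (simp add: d w)
qed

lemma convex_halfplane_det2: "convex {x. det2 v (x - p) \<ge> 0}"
  by (auto simp: convex_def det2_affine_comb)

lemma convex_hull_halfplane_det2:
  assumes "\<forall>x\<in>S. det2 v (x - p) \<ge> 0" "y \<in> convex hull S"
  shows "det2 v (y - p) \<ge> 0"
proof -
  have "convex hull S \<subseteq> {x. det2 v (x - p) \<ge> 0}"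
    using assms(1) by (intro hull_minimal convex_halfplane_det2) auto
  then show ?thesis using assms(2) by auto
qed

section \<open>Area of a triangle\<close>

text \<open>content_triangle is stated for real^2; areas are transferred along the coordinate
  isomorphism.\<close>

definition pair_of_vec :: "real^2 \<Rightarrow> real \<times> real" where
  "pair_of_vec x = (x$1, x$2)"

definition vec_of_pair :: "real \<times> real \<Rightarrow> real^2" where
  "vec_of_pair p = (\<chi> i. if i = 1 then fst p else snd p)"

lemma pair_of_vec_of_pair [simp]: "pair_of_vec (vec_of_pair p) = p"
  by (simp add: pair_of_vec_def vec_of_pair_def)

lemma vec_of_pair_of_vec [simp]: "vec_of_pair (pair_of_vec x) = x"
  unfolding pair_of_vec_def vec_of_pair_def by (simp add: vec_eq_iff) (metis exhaust_2)

lemma linear_vec_of_pair: "linear vec_of_pair"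
  by (rule linearI) (auto simp: vec_of_pair_def vec_eq_iff)

lemma pair_of_vec_measurable [measurable]: "pair_of_vec \<in> borel_measurable borel"
  unfolding pair_of_vec_def by measurable

lemma Basis_vec2: "(Basis :: (real^2) set) = {axis 1 1, axis 2 1}"
  by (auto simp: Basis_vec_def) (metis exhaust_2)

lemma Basis_real_prod: "(Basis :: (real \<times> real) set) = {(1,0), (0,1)}"
  by (auto simp: Basis_prod_def)

lemma vimage_pair_of_vec_box: "pair_of_vec -` box l u = box (vec_of_pair l) (vec_of_pair u)"
  by (cases l; cases u) (auto simp: mem_box Basis_vec2 Basis_real_prod pair_of_vec_def vec_of_pair_def
      inner_axis inner_Pair)

lemma lborel_eq_distr_pair_of_vec: "(lborel :: (real \<times> real) measure) = distr lborel borel pair_of_vec"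
proof (rule lborel_eqI)
  fix l u :: "real \<times> real"
  assume "\<And>b. b \<in> Basis \<Longrightarrow> l \<bullet> b \<le> u \<bullet> b"
  from this[of "(1,0)"] this[of "(0,1)"] have "fst l \<le> fst u" "snd l \<le> snd u"
    by (cases l; cases u; simp add: Basis_real_prod inner_Pair)+
  then show "emeasure (distr lborel borel pair_of_vec) (box l u) = (\<Prod>b\<in>Basis. (u - l) \<bullet> b)"
    by (cases l; cases u) (auto simp: emeasure_distr vimage_pair_of_vec_box emeasure_lborel_box_eq
        Basis_vec2 Basis_real_prod axis_eq_axis inner_axis vec_of_pair_def inner_Pair)
qed simp

lemma measure_vec_of_pair_image:
  assumes "S \<in> sets borel"
  shows "measure lborel (vec_of_pair ` S) = measure lborel S"
proof -
  have "measure lborel S = measure (distr lborel borel pair_of_vec) S"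
    using lborel_eq_distr_pair_of_vec by simp
  also have "\<dots> = measure lborel (pair_of_vec -` S)"
    using assms by (simp add: measure_distr)
  also have "pair_of_vec -` S = vec_of_pair ` S"
  proof (intro set_eqI iffI)
    fix x assume "x \<in> pair_of_vec -` S" then show "x \<in> vec_of_pair ` S"
      by (metis vec_of_pair_of_vec image_eqI vimageE)
  qed auto
  finally show ?thesis ..
qed

lemma measure_triangle:
  "measure lebesgue (convex hull {A, B, C}) = \<bar>det2 (B - A) (C - A)\<bar> / 2"
proof -
  have closed: "closed (convex hull {A, B, C})"
    by (simp add: compact_imp_closed finite_imp_compact_convex_hull)
  then have "measure lebesgue (convex hull {A, B, C}) = measure lborel (convex hull {A, B, C})"
    by (intro measure_completion) auto
  also have "\<dots> = measure lborel (vec_of_pair ` (convex hull {A, B, C}))"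
    using closed by (simp add: measure_vec_of_pair_image)
  also have "vec_of_pair ` (convex hull {A, B, C}) =
      convex hull {vec_of_pair A, vec_of_pair B, vec_of_pair C}"
    by (simp add: convex_hull_linear_image[OF linear_vec_of_pair])
  also have "measure lborel \<dots> = \<bar>det2 (B - A) (C - A)\<bar> / 2"
    using content_triangle[of "vec_of_pair A" "vec_of_pair B" "vec_of_pair C"]
    by (simp add: vec_of_pair_def det2_def abs_minus_commute algebra_simps)
  finally show ?thesis .
qed

lemma measure_closed_segment_pair: "measure lebesgue (closed_segment p q :: (real \<times> real) set) = 0"
  using measure_triangle[of p q q] by (simp add: segment_convex_hull)

section \<open>Cutting a convex hull along a chord\<close>

lemma mem_closed_segment_if_on_chord:
  assumes "q - p = \<kappa> *\<^sub>R u" "det2 u (z - p) = 0"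
    and "det2 v (z - p) \<ge> 0" "det2 v (q - p) > 0"
    and "det2 v' (z - q) \<ge> 0" "det2 v' (p - q) > 0"
  shows "z \<in> closed_segment p q"
proof -
  have "q - p \<noteq> 0" using assms(4) by auto
  moreover have "det2 (q - p) (z - p) = 0" using assms(1,2) by simp
  ultimately obtain r where r: "z - p = r *\<^sub>R (q - p)"
    using det2_eq_0_imp_parallel by blast
  have "det2 v (z - p) = r * det2 v (q - p)"
    by (simp add: r del: det2_diff_right)
  with assms(3,4) have "r \<ge> 0" by (simp add: zero_le_mult_iff)
  have "z - q = (1 - r) *\<^sub>R (p - q)"
    using r by (simp add: algebra_simps)
  then have "det2 v' (z - q) = (1 - r) * det2 v' (p - q)"
    by (simp del: det2_diff_right)
  with assms(5,6) have "r \<le> 1" by (simp add: zero_le_mult_iff)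
  have "z = (1 - r) *\<^sub>R p + r *\<^sub>R q"
    using r by (simp add: algebra_simps)
  with \<open>r \<ge> 0\<close> \<open>r \<le> 1\<close> show ?thesis by (auto simp: in_segment)
qed

lemma closed_segment_crosses_line:
  assumes "det2 u (a - p) \<le> 0" "det2 u (b - p) \<ge> 0"
  obtains z where "z \<in> closed_segment a b" "det2 u (z - p) = 0"
proof -
  define A B where "A = det2 u (a - p)" and "B = det2 u (b - p)"
  show ?thesis
  proof (cases "A = B")
    case True
    with assms have "det2 u (a - p) = 0" by (simp add: A_def B_def)
    then show ?thesis using that[of a] by simp
  next
    case False
    define s where "s = A / (A - B)"
    have gap: "A - B < 0" using assms False by (simp add: A_def B_def)
    then have "0 \<le> s" "s \<le> 1"
      using assms by (simp_all add: s_def A_def B_def divide_le_eq zero_le_divide_iff)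
    then have "(1 - s) *\<^sub>R a + s *\<^sub>R b \<in> closed_segment a b"
      by (auto simp: in_segment)
    moreover have "det2 u ((1 - s) *\<^sub>R a + s *\<^sub>R b - p) = (1 - s) * A + s * B"
      unfolding A_def B_def by (rule det2_affine_comb) simp
    moreover have "(1 - s) * A + s * B = 0"
      using gap by (simp add: s_def field_simps)
    ultimately show ?thesis using that by simp
  qed
qed

text \<open>The chord from p to q separates a from X, and the lines through p and q with directions
  v and v' support the whole hull, so the hull is cut along the chord.\<close>

lemma convex_hull_insert_eq_Un_triangle:
  assumes "p \<in> X" "q \<in> X" "q - p = \<kappa> *\<^sub>R u"
    and X_side: "\<forall>x\<in>X. det2 u (x - p) \<ge> 0" and a_side: "det2 u (a - p) \<le> 0"
    and supp_p: "\<forall>x\<in>insert a X. det2 v (x - p) \<ge> 0" "det2 v (q - p) > 0"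
    and supp_q: "\<forall>x\<in>insert a X. det2 v' (x - q) \<ge> 0" "det2 v' (p - q) > 0"
  shows "convex hull (insert a X) = convex hull X \<union> convex hull {a, p, q}"
    and "convex hull X \<inter> convex hull {a, p, q} \<subseteq> closed_segment p q"
proof -
  let ?K = "convex hull (insert a X)" and ?H = "convex hull X" and ?T = "convex hull {a, p, q}"
  have chord: "z \<in> closed_segment p q" if "det2 u (z - p) = 0" "z \<in> ?K" for z
    using mem_closed_segment_if_on_chord[OF assms(3) that(1)]
      convex_hull_halfplane_det2[OF supp_p(1) that(2)] supp_p(2)
      convex_hull_halfplane_det2[OF supp_q(1) that(2)] supp_q(2) .
  have pq_H: "closed_segment p q \<subseteq> ?H" and pq_T: "closed_segment p q \<subseteq> ?T"
    using assms(1,2) by (simp_all add: closed_segment_subset hull_inc)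
  have H_K: "?H \<subseteq> ?K" by (simp add: hull_mono subset_insertI)
  have T_K: "?T \<subseteq> ?K" using assms(1,2) by (intro hull_mono) auto
  have H_side: "det2 u (y - p) \<ge> 0" if "y \<in> ?H" for y
    using convex_hull_halfplane_det2[OF X_side that] .
  have T_side: "det2 (- u) (y - p) \<ge> 0" if "y \<in> ?T" for y
    using convex_hull_halfplane_det2[of "{a, p, q}" "- u" p y] that a_side assms(3) by simp
  have "?K \<subseteq> ?H \<union> ?T"
  proof
    fix x assume "x \<in> ?K"
    moreover have "X \<noteq> {}" using assms(1) by auto
    ultimately obtain t w b where tw: "0 \<le> t" "0 \<le> w" "t + w = 1" and b: "b \<in> ?H"
      and "x = t *\<^sub>R a + w *\<^sub>R b"
      unfolding convex_hull_insert[OF \<open>X \<noteq> {}\<close>] by blast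
    then have x: "x \<in> closed_segment a b"
      by (auto simp: in_segment intro!: exI[of _ w])
    obtain z where z: "z \<in> closed_segment a b" "det2 u (z - p) = 0"
      using closed_segment_crosses_line[OF a_side H_side[OF b]] by blast
    have "closed_segment a b \<subseteq> ?K"
      using b H_K by (intro closed_segment_subset) (auto simp: hull_inc)
    with z have "z \<in> closed_segment p q" using chord by blast
    then have "closed_segment z b \<subseteq> ?H" "closed_segment a z \<subseteq> ?T"
      using b pq_H pq_T
      by (meson closed_segment_subset convex_convex_hull hull_inc insertI1 subsetD)+
    moreover have "x \<in> closed_segment a z \<union> closed_segment z b"
      using Un_closed_segment[OF z(1)] x by simp
    ultimately show "x \<in> ?H \<union> ?T" by blast
  qed
  moreover have "?H \<union> ?T \<subseteq> ?K" using H_K T_K by simp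
  ultimately show "?K = ?H \<union> ?T" by blast
  show "?H \<inter> ?T \<subseteq> closed_segment p q"
  proof
    fix y assume y: "y \<in> ?H \<inter> ?T"
    with H_side[of y] T_side[of y] have "det2 u (y - p) = 0" by simp
    moreover have "y \<in> ?K" using y H_K by auto
    ultimately show "y \<in> closed_segment p q" by (rule chord)
  qed
qed

lemma measure_convex_hull_insert_eq_add_triangle:
  assumes "finite X" "p \<in> X" "q \<in> X" "q - p = \<kappa> *\<^sub>R u"
    and "\<forall>x\<in>X. det2 u (x - p) \<ge> 0" "det2 u (a - p) \<le> 0"
    and "\<forall>x\<in>insert a X. det2 v (x - p) \<ge> 0" "det2 v (q - p) > 0"
    and "\<forall>x\<in>insert a X. det2 v' (x - q) \<ge> 0" "det2 v' (p - q) > 0"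
  shows "measure lebesgue (convex hull (insert a X)) =
         measure lebesgue (convex hull X) + measure lebesgue (convex hull {a, p, q})"
proof -
  note split = convex_hull_insert_eq_Un_triangle[OF assms(2-)]
  have meas: "convex hull X \<in> lmeasurable" "convex hull {a, p, q} \<in> lmeasurable"
    using assms(1) by (simp_all add: lmeasurable_compact finite_imp_compact_convex_hull)
  have "measure lebesgue (convex hull X \<inter> convex hull {a, p, q}) \<le> measure lebesgue (closed_segment p q)"
    using split(2) meas by (intro measure_mono_fmeasurable) (auto intro: lmeasurable_compact)
  then have "measure lebesgue (convex hull X \<inter> convex hull {a, p, q}) = 0"
    using measure_closed_segment_pair[of p q] measure_nonneg[of lebesgue] by (simp add: order_antisym)
  then show ?thesis
    unfolding split(1) using measure_Un3[OF meas] by simp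
qed

section \<open>Strictly convex centrally symmetric polygons\<close>

lemma periodic_mod_eq:
  fixes f :: "nat \<Rightarrow> 'a" and m :: nat
  assumes "\<forall>i. f (i + m) = f i"
  shows "f (i mod m) = f i"
proof -
  have "f (j + k * m) = f j" for j k
  proof (induction k)
    case (Suc k)
    have "f (j + Suc k * m) = f ((j + k * m) + m)" by (simp add: algebra_simps)
    then show ?case using assms Suc by simp
  qed simp
  then show ?thesis by (metis mod_div_mult_eq)
qed

lemma mod_add_neq:
  fixes k m i :: nat
  assumes "0 < k" "k < m"
  shows "(i + k) mod m \<noteq> i mod m"
proof
  assume "(i + k) mod m = i mod m"
  then have "m dvd k" using mod_eq_dvd_iff_nat[of i "i + k" m] by simp
  with assms show False using nat_dvd_not_less by blast
qed

lemma ex_mod_rep_atLeastAtMost: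
  fixes m :: nat
  assumes "0 < m"
  obtains i' where "i' \<in> {1..m}" "i' mod m = i mod m"
  using assms that[of "if i mod m = 0 then m else i mod m"] by (auto split: if_splits)

lemma strictly_convex_ccwD:
  assumes "strictly_convex_ccw m U" "i \<in> {1..m}" "j \<in> {1..m}" "j \<noteq> i" "j \<noteq> i mod m + 1"
  shows "det2 (U (Suc i) - U i) (U j - U i) > 0"
  using assms unfolding strictly_convex_ccw_def by blast

locale symmetric_polygon =
  fixes n :: nat and U :: "nat \<Rightarrow> real \<times> real"
  assumes n_ge_2: "n \<ge> 2"
    and U_periodic: "\<forall>i. U (i + 2*n) = U i"
    and U_antipodal: "\<forall>i. U (i + n) = - U i"
    and U_convex: "strictly_convex_ccw (2*n) U"
begin

abbreviation edge :: "nat \<Rightarrow> real \<times> real" where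
  "edge i \<equiv> U (Suc i) - U i"

abbreviation V :: "nat \<Rightarrow> real \<times> real" where
  "V \<equiv> Vhalf U"

lemma U_mod_eq: "i mod (2*n) = j mod (2*n) \<Longrightarrow> U i = U j"
  using periodic_mod_eq[OF U_periodic] by metis

lemma det2_edge_vertex_pos:
  assumes "j mod (2*n) \<noteq> i mod (2*n)" "j mod (2*n) \<noteq> Suc i mod (2*n)"
  shows "det2 (edge i) (U j - U i) > 0"
proof -
  have "0 < 2*n" using n_ge_2 by simp
  obtain i' where i': "i' \<in> {1..2*n}" "i' mod (2*n) = i mod (2*n)"
    using ex_mod_rep_atLeastAtMost[OF \<open>0 < 2*n\<close>] .
  obtain j' where j': "j' \<in> {1..2*n}" "j' mod (2*n) = j mod (2*n)"
    using ex_mod_rep_atLeastAtMost[OF \<open>0 < 2*n\<close>] .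
  have Suc_i': "Suc i' mod (2*n) = Suc i mod (2*n)" using i'(2) by (metis mod_Suc_eq)
  then have "(i' mod (2*n) + 1) mod (2*n) = Suc i mod (2*n)"
    by (metis Suc_eq_plus1 mod_Suc_eq)
  then have "j' \<noteq> i' mod (2*n) + 1" using assms(2) j' by auto
  moreover have "j' \<noteq> i'" using assms(1) i' j' by auto
  ultimately have "det2 (edge i') (U j' - U i') > 0"
    using strictly_convex_ccwD[OF U_convex i'(1) j'(1)] by blast
  moreover have "U (Suc i') = U (Suc i)" "U i' = U i" "U j' = U j"
    using U_mod_eq[OF Suc_i'] U_mod_eq[OF i'(2)] U_mod_eq[OF j'(2)] by simp_all
  ultimately show ?thesis by simp
qed

lemma det2_edge_vertex_nonneg: "det2 (edge i) (U j - U i) \<ge> 0"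
  using det2_edge_vertex_pos[of j i] U_mod_eq[of j i] U_mod_eq[of j "Suc i"]
  by (cases "j mod (2*n) = i mod (2*n) \<or> j mod (2*n) = Suc i mod (2*n)") auto

lemma edge_antipodal: "edge (i + n) = - edge i"
  using U_antipodal[rule_format, of i] U_antipodal[rule_format, of "Suc i"] by simp

lemma det2_U_Suc_pos: "det2 (U i) (U (Suc i)) > 0"
proof -
  have "det2 (edge i) (U (i + n) - U i) > 0"
    using mod_add_neq[of n "2*n" i] mod_add_neq[of "n - 1" "2*n" "Suc i"] n_ge_2
    by (intro det2_edge_vertex_pos) (auto simp: add.commute)
  then show ?thesis using U_antipodal[rule_format, of i] by (simp add: det2_def algebra_simps)
qed

lemma det2_edge_Suc_pos: "det2 (edge i) (edge (Suc i)) > 0"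
proof -
  have "det2 (edge i) (U (i + 2) - U i) > 0"
    using mod_add_neq[of 2 "2*n" i] mod_add_neq[of 1 "2*n" "Suc i"] n_ge_2
    by (intro det2_edge_vertex_pos) auto
  moreover have "det2 (edge i) (U (i + 2) - U i) = det2 (edge i) (edge (Suc i))"
    by (simp add: det2_def algebra_simps)
  ultimately show ?thesis by simp
qed

text \<open>If the turn failed at edge k + j + 1, then U (k + n) - U (k + j + 1) would lie in the cone
  of edges k + j and k + j + 1, hence weakly right of edge k; but U (k + j + 1) lies strictly
  left of the antipodal edge, whose direction is - edge k.\<close>

lemma det2_edge_pos:
  assumes "0 < j" "j < n"
  shows "det2 (edge k) (edge (k + j)) > 0"
  using assms
proof (induction j rule: nat_induct_non_zero)
  case 1
  then show ?case using det2_edge_Suc_pos[of k] by simp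
next
  case (Suc j)
  show ?case
  proof (rule ccontr)
    assume turn_fails: "\<not> det2 (edge k) (edge (k + Suc j)) > 0"
    let ?y = "U (k + n) - U (k + Suc j)"
    have "det2 (edge (k + j)) ?y \<ge> 0"
      using det2_edge_vertex_nonneg[of "k + j" "k + n"] by (simp add: det2_def algebra_simps)
    moreover have "det2 (edge (k + Suc j)) ?y \<ge> 0"
      by (rule det2_edge_vertex_nonneg)
    ultimately have "det2 (edge k) ?y \<le> 0"
      using Suc turn_fails det2_nonpos_in_cone[OF det2_edge_Suc_pos[of "k + j"], of ?y "edge k"]
      by simp
    moreover have "det2 (edge (k + n)) (U (k + Suc j) - U (k + n)) > 0"
    proof (rule det2_edge_vertex_pos)
      have "(k + Suc j + (n - Suc j)) mod (2*n) \<noteq> (k + Suc j) mod (2*n)"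
        using Suc by (intro mod_add_neq) auto
      moreover have "k + Suc j + (n - Suc j) = k + n" using Suc by simp
      ultimately show "(k + Suc j) mod (2*n) \<noteq> (k + n) mod (2*n)" by metis
      have "(k + Suc j + (n - j)) mod (2*n) \<noteq> (k + Suc j) mod (2*n)"
        using Suc by (intro mod_add_neq) auto
      moreover have "k + Suc j + (n - j) = Suc (k + n)" using Suc by simp
      ultimately show "(k + Suc j) mod (2*n) \<noteq> Suc (k + n) mod (2*n)" by metis
    qed
    moreover have "det2 (edge (k + n)) (U (k + Suc j) - U (k + n)) = det2 (edge k) ?y"
      using U_antipodal[rule_format, of k] U_antipodal[rule_format, of "Suc k"]
      by (simp add: det2_def algebra_simps)
    ultimately show False by linarith
  qed
qed

lemma V_eq: "V i = (1 / det2 (U i) (U (Suc i))) *\<^sub>R edge i"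
  by (simp add: Vhalf_def)

lemma V_antipodal: "V (i + n) = - V i"
  using U_antipodal[rule_format, of i] U_antipodal[rule_format, of "Suc i"] 
  by (simp add: V_eq algebra_simps)

lemma det2_U_V: "det2 (U i) (V i) = 1"
  using det2_U_Suc_pos[of i] by (simp add: V_eq det2_diff_right)

lemma det2_U_Suc_V: "det2 (U (Suc i)) (V i) = 1"
  using det2_U_Suc_pos[of i] by (simp add: V_eq det2_diff_right det2_commute[of "U (Suc i)"])

lemma det2_V_pos: "0 < j \<Longrightarrow> j < n \<Longrightarrow> det2 (V k) (V (k + j)) > 0"
  using det2_edge_pos[of j k] det2_U_Suc_pos[of k] det2_U_Suc_pos[of "k + j"] by (simp add: V_eq)

lemma det2_V_nonneg: "j < n \<Longrightarrow> det2 (V k) (V (k + j)) \<ge> 0"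
  using det2_V_pos[of j k] by (cases "j = 0") auto

end

section \<open>Arcs of the polygon P\<close>

lemma V_length_Suc:
  assumes "n \<ge> 1"
  shows "V_length n lam (Suc i) = V_length n lam i + lam (i + n) - lam i"
proof -
  obtain m where m: "i + n = Suc m" using assms by (metis add_Suc_right not0_implies_Suc not_one_le_zero)
  then have "V_length n lam i + lam (i + n) = (\<Sum>j=i..i+n. lam j)"
    by (simp add: V_length_def sum.cl_ivl_Suc)
  also have "\<dots> = lam i + V_length n lam (Suc i)"
    by (simp add: V_length_def sum.atLeast_Suc_atMost)
  finally show ?thesis by simp
qed

locale symmetric_arc_polygon = symmetric_polygon +
  fixes P :: "nat \<Rightarrow> real \<times> real" and lam :: "nat \<Rightarrow> real" and c :: real
  assumes c_pos: "c > 0"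
    and P_periodic: "\<forall>i. P (i + 2*n) = P i"
    and P_edges: "\<forall>i. P (Suc i) - P i = lam i *\<^sub>R Vhalf U i"
    and lam_nonneg: "\<forall>i. lam i \<ge> 0"
    and P_antipodal: "\<forall>i. P i - P (i + n) = (2 * c) *\<^sub>R U i"
begin

lemma P_diff_eq_sum: "i \<le> j \<Longrightarrow> P j - P i = (\<Sum>l=i..<j. lam l *\<^sub>R V l)"
proof (induction j rule: dec_induct)
  case (step j)
  have "P (Suc j) - P i = (P j - P i) + (P (Suc j) - P j)" by simp
  then show ?case using step P_edges by simp
qed simp

lemma P_add_n: "P (k + n) - P k = (- 2 * c) *\<^sub>R U k"
  using P_antipodal[rule_format, of k] by (simp add: algebra_simps)

lemma det2_V_P_forward:
  assumes "r \<le> n"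
  shows "det2 (V k) (P (k + r) - P k) \<ge> 0"
proof -
  have "det2 (V k) (V l) \<ge> 0" if "l \<in> {k..<k+r}" for l
  proof -
    have "l - k < n" using that assms by auto
    then show ?thesis using det2_V_nonneg[of "l - k" k] that by simp
  qed
  then have "(\<Sum>l=k..<k+r. lam l * det2 (V k) (V l)) \<ge> 0"
    using lam_nonneg by (intro sum_nonneg) simp
  then show ?thesis by (simp add: P_diff_eq_sum det2_sum_right)
qed

lemma det2_V_P_backward:
  assumes "n \<le> r" "r \<le> 2*n"
  shows "det2 (V k) (P (k + r) - P k) \<ge> 0"
proof -
  have "det2 (V k) (V l) \<le> 0" if "l \<in> {k+r..<k+2*n}" for l
  proof -
    have "l = (k + (l - k - n)) + n" using that assms by simp
    then have "V l = - V (k + (l - k - n))" using V_antipodal by metis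
    moreover have "l - k - n < n" using that assms by auto
    ultimately show ?thesis using det2_V_nonneg[of "l - k - n" k] by simp
  qed
  then have "(\<Sum>l=k+r..<k+2*n. lam l * det2 (V k) (V l)) \<le> 0"
    using lam_nonneg by (intro sum_nonpos) (simp add: mult_nonneg_nonpos)
  moreover have "P (k + r) - P k = - (P (k + 2*n) - P (k + r))"
    using P_periodic by simp
  ultimately show ?thesis
    using assms by (simp add: P_diff_eq_sum det2_sum_right)
qed

lemma ex_P_eq_P_add: obtains r where "r < 2*n" "P j = P (k + r)"
proof
  define r where "r = (j + 2*n*k - k) mod (2*n)"
  show "r < 2*n" using n_ge_2 by (simp add: r_def)
  have "k \<le> j + 2*n*k" using n_ge_2 by (simp add: trans_le_add2)
  have "(k + r) mod (2*n) = (k + (j + 2*n*k - k)) mod (2*n)"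
    by (simp add: r_def mod_add_right_eq)
  also have "k + (j + 2*n*k - k) = j + 2*n*k" using \<open>k \<le> j + 2*n*k\<close> by simp
  finally have "(k + r) mod (2*n) = j mod (2*n)" by simp
  then show "P j = P (k + r)"
    using periodic_mod_eq[OF P_periodic] by metis
qed

lemma det2_V_P_nonneg: "det2 (V k) (P j - P k) \<ge> 0"
proof -
  obtain r where "r < 2*n" "P j = P (k + r)" by (rule ex_P_eq_P_add)
  then show ?thesis
    using det2_V_P_forward[of r k] det2_V_P_backward[of r k] by (cases "r \<le> n") auto
qed

lemma det2_U_V_neg_after:
  assumes "k < l" "l < l'" "l' < k + n" "det2 (U k) (V l) \<le> 0"
  shows "det2 (U k) (V l') < 0"
proof -
  have kl: "det2 (V k) (V l) > 0" using det2_V_pos[of "l - k" k] assms by simp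
  have kl': "det2 (V k) (V l') > 0" using det2_V_pos[of "l' - k" k] assms by simp
  have ll': "det2 (V l) (V l') > 0" using det2_V_pos[of "l' - l" l] assms by simp
  have "det2 (U k) (V l) * det2 (V k) (V l') \<le> 0"
    using assms(4) kl' by (simp add: mult_nonpos_nonneg)
  then have "det2 (U k) (V l') * det2 (V k) (V l) < 0"
    using det2_grassmann_pluecker[of "U k" "V l'" "V k" "V l"] det2_U_V[of k] ll' by simp
  then show ?thesis using kl by (simp add: mult_less_0_iff)
qed

text \<open>Along the arc, the sign of det2 (U k) (V l) changes at most once, from + to -, and the
  contributions sum to 0 over the whole arc, since P (k + n) - P k is parallel to U k.\<close>

lemma det2_U_P_arc_nonneg:
  assumes "k \<le> j" "j \<le> k + n"
  shows "det2 (U k) (P j - P k) \<ge> 0"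
proof -
  define s where "s l = lam l * det2 (U k) (V l)" for l
  have partial: "det2 (U k) (P j' - P k) = (\<Sum>l=k..<j'. s l)" if "k \<le> j'" for j'
    using that by (simp add: P_diff_eq_sum det2_sum_right s_def)
  show ?thesis
  proof (cases "\<exists>l0\<in>{k..<j}. det2 (U k) (V l0) \<le> 0")
    case False
    then have "(\<Sum>l=k..<j. s l) \<ge> 0"
      using lam_nonneg by (intro sum_nonneg) (simp add: s_def not_le less_imp_le)
    then show ?thesis using partial assms by simp
  next
    case True
    then obtain l0 where l0: "l0 \<in> {k..<j}" "det2 (U k) (V l0) \<le> 0" by blast
    then have "l0 \<noteq> k" using det2_U_V[of k] by auto
    have "s l \<le> 0" if "l \<in> {j..<k+n}" for l
      using det2_U_V_neg_after[of k l0 l] l0 that \<open>l0 \<noteq> k\<close> lam_nonneg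
      by (simp add: s_def mult_nonneg_nonpos)
    then have tail: "(\<Sum>l=j..<k+n. s l) \<le> 0" by (rule sum_nonpos)
    have "(\<Sum>l=k..<k+n. s l) = 0" using partial[of "k + n"] by (simp add: P_add_n)
    moreover have "(\<Sum>l=k..<k+n. s l) = (\<Sum>l=k..<j. s l) + (\<Sum>l=j..<k+n. s l)"
      using assms by (simp add: sum.atLeastLessThan_concat)
    ultimately show ?thesis using partial assms tail by simp
  qed
qed

lemma measure_convex_hull_insert_arc:
  assumes "det2 (U k) (P t - P k) \<le> 0"
  shows "measure lebesgue (convex hull (insert (P t) (P ` {k..k+n}))) =
         arc_area n P k + measure lebesgue (convex hull {P t, P k, P (k+n)})"
  unfolding arc_area_def
proof (rule measure_convex_hull_insert_eq_add_triangle)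
  show "P (k + n) - P k = (- 2 * c) *\<^sub>R U k" by (rule P_add_n)
  show "\<forall>x\<in>P ` {k..k + n}. 0 \<le> det2 (U k) (x - P k)"
    using det2_U_P_arc_nonneg by auto
  show "0 < det2 (V k) (P (k + n) - P k)"
    using c_pos det2_U_V[of k] by (simp add: P_add_n det2_commute[of "V k"])
  have "P k - P (k + n) = (2 * c) *\<^sub>R U k" using P_antipodal by blast
  then show "0 < det2 (V (k + n)) (P k - P (k + n))"
    using c_pos det2_U_V[of k] by (simp add: V_antipodal det2_commute[of "V k"])
qed (use assms det2_V_P_nonneg in auto)

lemma arc_area_minus_V_length_Suc:
  "arc_area n P (Suc i) - c * V_length n lam (Suc i) = arc_area n P i - c * V_length n lam i"
proof -
  have e1: "P (Suc (i + n)) = P i - (2 * c) *\<^sub>R U i + lam (i + n) *\<^sub>R V (i + n)"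
    using P_edges[rule_format, of "i + n"] P_antipodal[rule_format, of i] by (simp add: algebra_simps)
  have e2: "P (Suc (i + n)) = P (Suc i) - (2 * c) *\<^sub>R U (Suc i)"
    using P_antipodal[rule_format, of "Suc i"] by (simp add: algebra_simps)
  have e3: "P (Suc i) = P i + lam i *\<^sub>R V i"
    using P_edges[rule_format, of i] by (simp add: algebra_simps)
  have e4: "P (i + n) = P i - (2 * c) *\<^sub>R U i"
    using P_antipodal[rule_format, of i] by (simp add: algebra_simps)
  have "P ` {i..Suc (i + n)} = insert (P (Suc (i + n))) (P ` {i..i + n})"
    by (simp add: atLeastAtMostSuc_conv)
  moreover have "det2 (U i) (P (Suc (i + n)) - P i) \<le> 0"
    using det2_U_V[of i] lam_nonneg by (simp add: e1 V_antipodal det2_diff_right)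
  ultimately have A1: "measure lebesgue (convex hull (P ` {i..Suc (i + n)})) =
      arc_area n P i + measure lebesgue (convex hull {P (Suc (i + n)), P i, P (i + n)})"
    using measure_convex_hull_insert_arc by simp
  have "P ` {i..Suc (i + n)} = insert (P i) (P ` {Suc i..Suc i + n})"
    by (simp add: atLeastAtMost_insertL[symmetric])
  moreover have "det2 (U (Suc i)) (P i - P (Suc i)) \<le> 0"
    using det2_U_Suc_V[of i] lam_nonneg by (simp add: e3 det2_diff_right)
  ultimately have A2: "measure lebesgue (convex hull (P ` {i..Suc (i + n)})) =
      arc_area n P (Suc i) + measure lebesgue (convex hull {P i, P (Suc i), P (Suc i + n)})"
    using measure_convex_hull_insert_arc[of "Suc i" i] by simp
  have T1: "measure lebesgue (convex hull {P (Suc (i + n)), P i, P (i + n)}) = c * lam (i + n)"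
    unfolding measure_triangle using det2_U_V[of i] c_pos lam_nonneg
    by (simp add: e1 e4 V_antipodal det2_commute[of "V i"] det2_diff_right det2_diff_left algebra_simps)
  have T2: "measure lebesgue (convex hull {P i, P (Suc i), P (Suc i + n)}) = c * lam i"
    unfolding measure_triangle using det2_U_Suc_V[of i] c_pos lam_nonneg
    by (simp add: e2 e3 det2_commute[of "V i"] det2_diff_right det2_diff_left algebra_simps)
  have "c * V_length n lam (Suc i) = c * V_length n lam i + c * lam (i + n) - c * lam i"
    unfolding V_length_Suc[of n lam i, OF order.trans[OF one_le_numeral n_ge_2]]
    by (simp add: algebra_simps)
  then show ?thesis using A1 A2 T1 T2 by linarith
qed

lemma arc_area_minus_V_length_eq: "arc_area n P i - c * V_length n lam i = arc_area n P 0 - c * V_length n lam 0"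
  by (induction i) (simp_all add: arc_area_minus_V_length_Suc)

end

theorem corollary3p5:
  fixes n :: nat and U P :: "nat \<Rightarrow> real \<times> real" and lam :: "nat \<Rightarrow> real" and c :: real
  assumes n2: "n \<ge> 2"
    and U_per: "\<forall>i. U (i + 2*n) = U i"
    and U_sym: "\<forall>i. U (i + n) = - U i"
    and U_conv: "strictly_convex_ccw (2*n) U"
    and c_pos: "c > 0"
    and P_per: "\<forall>i. P (i + 2*n) = P i"
    and lam_per: "\<forall>i. lam (i + 2*n) = lam i"
    and P_conv: "convex_ccw (2*n) P"
    and P_int: "interior (convex hull (P ` {1..2*n})) \<noteq> {}"
    and P_edges: "\<forall>i. P (Suc i) - P i = lam i *\<^sub>R Vhalf U i"
    and lam_nonneg: "\<forall>i. lam i \<ge> 0"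
    and P_U: "\<forall>i. P i - P (i + n) = (2 * c) *\<^sub>R U i"
  shows "\<forall>i\<in>{1..2*n}. \<forall>j\<in>{1..2*n}.
           arc_area n P i - c * V_length n lam i = arc_area n P j - c * V_length n lam j"
proof -
  interpret symmetric_arc_polygon n U P lam c
    using n2 U_per U_sym U_conv c_pos P_per P_edges lam_nonneg P_U by unfold_locales
  show ?thesis using arc_area_minus_V_length_eq by metis
qed

end
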